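(* Let $X$ be a vector field on $\mathbb{S}^1$ which is not (the restriction of) a Killing vector field, with support function $\phi_X$. Then any two distinct spacelike support planes of $\mathrm{epi}^+(\phi_X^-)$ at points of $\mathrm{gr}(\phi_X^-|_{\mathbb{D}^2})$ (resp. of $\mathrm{epi}^-(\phi_X^+)$ at points of $\mathrm{gr}(\phi_X^+|_{\mathbb{D}^2})$) intersect in a spacelike geodesic of $\mathbb{D}^2\times\mathbb{R}$.
   Context: $\mathbb{R}^{1,2}$ is $\mathbb{R}^3$ with $\langle x,y\rangle=-x_0y_0+x_1y_1+x_2y_2$; $\mathbb{D}^2$ is the open unit disk, $\mathbb{S}^1$ its boundary. A vector field $X$ on $\mathbb{S}^1$ is $X(z)=iz\phi_X(z)$; it is the restriction of a Killing field iff $\phi_X(z)=\langle(1,z),\sigma\rangle$ for some $\sigma\in\mathbb{R}^{1,2}$. $\phi_X^-(\eta)=\sup\{a(\eta):a\text{ affine},a|_{\mathbb{S}^1}\le\phi_X\}$, $\phi_X^+(\eta)=\inf\{a(\eta):a\text{ affine},a|_{\mathbb{S}^1}\ge\phi_X\}$ for $\eta\in\overline{\mathbb{D}^2}$; $\mathrm{epi}^+(\phi_X^-)=\{(\eta,t)\in\overline{\mathbb{D}^2}\times\mathbb{R}:t\ge\phi_X^-(\eta)\}$, $\mathrm{epi}^-(\phi_X^+)=\{(\eta,t):t\le\phi_X^+(\eta)\}$. Spacelike planes are the non-vertical planes $P_\sigma=\{(\eta,t)\in\mathbb{D}^2\times\mathbb{R}:t=\langle(1,\eta),\sigma\rangle\}$,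 $\sigma\in\mathbb{R}^{1,2}$. $P_\sigma$ is a support plane of $\mathrm{epi}^+(\phi_X^-)$ at a point of $\mathrm{gr}(\phi_X^-|_{\mathbb{D}^2})$ if $\langle(1,\eta),\sigma\rangle\le\phi_X^-(\eta)$ for all $\eta\in\mathbb{D}^2$ with equality at some $\eta_0\in\mathbb{D}^2$ (resp. for $\mathrm{epi}^-(\phi^+_X)$: $\ge\phi_X^+$ with equality somewhere). A spacelike geodesic of $\mathbb{D}^2\times\mathbb{R}$ is a nonempty intersection of $\mathbb{D}^2\times\mathbb{R}$ with an affine line of $\mathbb{R}^3$ that is not vertical (not of the form $\{p\}\times\mathbb{R}$). *)

theory Defs
  imports "HOL-Analysis.Analysis"
begin

text \<open>Minkowski space R^{1,2}: a vector (x0,x1,x2) is encoded as (x0, x1 + i x2) :: real \<times> complex.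
  Points of the plane R^2 (disk, circle) are encoded as complex numbers.\<close>

definition lor :: "real \<times> complex \<Rightarrow> real \<times> complex \<Rightarrow> real" where
  "lor x y = - fst x * fst y + Re (snd x) * Re (snd y) + Im (snd x) * Im (snd y)"

text \<open>Support function phi of a vector field X(z) = i z phi(z) on S^1; X is (the restriction of)
  a Killing field iff phi(z) = <(1,z),sigma> on S^1 for some sigma.\<close>

definition killing_support :: "(complex \<Rightarrow> real) \<Rightarrow> bool" where
  "killing_support \<phi> \<longleftrightarrow> (\<exists>\<sigma>. \<forall>z\<in>sphere 0 1. \<phi> z = lor (1, z) \<sigma>)"

definition affine_fun :: "(complex \<Rightarrow> real) \<Rightarrow> bool" where
  "affine_fun a \<longleftrightarrow> (\<exists>c b1 b2. \<forall>\<eta>. a \<eta> = c + b1 * Re \<eta> + b2 * Im \<eta>)"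

definition phi_minus :: "(complex \<Rightarrow> real) \<Rightarrow> complex \<Rightarrow> real" where
  "phi_minus \<phi> \<eta> = Sup {a \<eta> | a. affine_fun a \<and> (\<forall>z\<in>sphere 0 1. a z \<le> \<phi> z)}"

definition phi_plus :: "(complex \<Rightarrow> real) \<Rightarrow> complex \<Rightarrow> real" where
  "phi_plus \<phi> \<eta> = Inf {a \<eta> | a. affine_fun a \<and> (\<forall>z\<in>sphere 0 1. a z \<ge> \<phi> z)}"

definition spacelike_plane :: "real \<times> complex \<Rightarrow> (complex \<times> real) set" where
  "spacelike_plane \<sigma> = {(\<eta>, t). \<eta> \<in> ball 0 1 \<and> t = lor (1, \<eta>) \<sigma>}"

definition support_plane_epi_plus :: "(complex \<Rightarrow> real) \<Rightarrow> real \<times> complex \<Rightarrow> bool" where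
  "support_plane_epi_plus \<phi> \<sigma> \<longleftrightarrow>
     (\<forall>\<eta>\<in>ball 0 1. lor (1, \<eta>) \<sigma> \<le> phi_minus \<phi> \<eta>) \<and>
     (\<exists>\<eta>0\<in>ball 0 1. lor (1, \<eta>0) \<sigma> = phi_minus \<phi> \<eta>0)"

definition support_plane_epi_minus :: "(complex \<Rightarrow> real) \<Rightarrow> real \<times> complex \<Rightarrow> bool" where
  "support_plane_epi_minus \<phi> \<sigma> \<longleftrightarrow>
     (\<forall>\<eta>\<in>ball 0 1. lor (1, \<eta>) \<sigma> \<ge> phi_plus \<phi> \<eta>) \<and>
     (\<exists>\<eta>0\<in>ball 0 1. lor (1, \<eta>0) \<sigma> = phi_plus \<phi> \<eta>0)"

definition spacelike_geodesic :: "(complex \<times> real) set \<Rightarrow> bool" where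
  "spacelike_geodesic S \<longleftrightarrow>
     S \<noteq> {} \<and>
     (\<exists>p v::complex \<times> real. fst v \<noteq> 0 \<and>
        S = (ball 0 1 \<times> UNIV) \<inter> {p + r *\<^sub>R v | r. True})"

end

theory Submission
  imports Defs
begin

text \<open>Two support planes of \<open>epi\<^sup>+(\<phi>\<^sup>-)\<close> touching the graph at \<open>a\<close> and \<open>b\<close>
  lie below \<open>\<phi>\<^sup>-\<close>, so their height difference changes sign between \<open>a\<close> and \<open>b\<close>; by
  connectedness of the disk they meet above some point of the disk. Two distinct non-vertical
  planes meeting above the disk intersect in a non-vertical line through it.\<close>

lemma lor_one_eq_inner: "lor (1, \<eta>) \<sigma> = inner \<eta> (snd \<sigma>) - fst \<sigma>"
  by (simp add: lor_def inner_complex_def)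

lemma continuous_on_lor_one: "continuous_on S (\<lambda>\<eta>. lor (1, \<eta>) \<sigma>)"
  unfolding lor_one_eq_inner by (intro continuous_intros)

lemma connected_sign_change_imp_zero:
  fixes h :: "'a::topological_space \<Rightarrow> real"
  assumes "connected S" "continuous_on S h" "a \<in> S" "b \<in> S" "h a \<le> 0" "0 \<le> h b"
  shows "\<exists>x\<in>S. h x = 0"
  using connectedD_interval[OF connected_continuous_image[OF assms(2,1)], of "h a" "h b" 0]
    assms(3-6) by auto

lemma touching_minorants_meet:
  fixes f f' g :: "'a::topological_space \<Rightarrow> real"
  assumes "connected S" "continuous_on S f" "continuous_on S f'"
    and "\<forall>x\<in>S. f x \<le> g x" "\<forall>x\<in>S. f' x \<le> g x"
    and "a \<in> S" "f a = g a" "b \<in> S" "f' b = g b"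
  shows "\<exists>x\<in>S. f x = f' x"
proof -
  have "\<exists>x\<in>S. f' x - f x = 0"
  proof (rule connected_sign_change_imp_zero[where a = a and b = b])
    show "continuous_on S (\<lambda>x. f' x - f x)"
      using assms(2,3) by (rule continuous_on_diff[rotated])
  qed (use assms in auto)
  then show ?thesis by (metis eq_iff_diff_eq_0)
qed

lemma support_planes_epi_plus_meet:
  assumes "support_plane_epi_plus \<phi> \<sigma>" "support_plane_epi_plus \<phi> \<sigma>'"
  shows "\<exists>\<eta>\<in>ball 0 1. lor (1, \<eta>) \<sigma> = lor (1, \<eta>) \<sigma>'"
  using assms unfolding support_plane_epi_plus_def
  by (elim conjE bexE, intro touching_minorants_meet[where g = "phi_minus \<phi>"])
    (simp_all add: continuous_on_lor_one)

lemma support_planes_epi_minus_meet: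
  assumes "support_plane_epi_minus \<phi> \<sigma>" "support_plane_epi_minus \<phi> \<sigma>'"
  shows "\<exists>\<eta>\<in>ball 0 1. lor (1, \<eta>) \<sigma> = lor (1, \<eta>) \<sigma>'"
proof -
  have "\<exists>\<eta>\<in>ball 0 1. - lor (1, \<eta>) \<sigma> = - lor (1, \<eta>) \<sigma>'"
    using assms unfolding support_plane_epi_minus_def
    by (elim conjE bexE, intro touching_minorants_meet[where g = "\<lambda>\<eta>. - phi_plus \<phi> \<eta>"])
      (simp_all add: continuous_on_lor_one continuous_on_minus)
  then show ?thesis by simp
qed

lemma inner_eq_0_iff_scaleR_ii_mult:
  fixes x d :: complex
  assumes "d \<noteq> 0"
  shows "inner x d = 0 \<longleftrightarrow> (\<exists>r. x = r *\<^sub>R (\<i> * d))"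
proof
  assume orth: "inner x d = 0"
  have sum_sq_nonzero: "(Re d)\<^sup>2 + (Im d)\<^sup>2 \<noteq> 0"
    using assms by (simp add: complex_eq_iff)
  define r where "r = (Re d * Im x - Im d * Re x) / ((Re d)\<^sup>2 + (Im d)\<^sup>2)"
  have "x = r *\<^sub>R (\<i> * d)"
    using orth sum_sq_nonzero unfolding r_def
    by (simp add: complex_eq_iff inner_complex_def field_simps power2_eq_square)
      algebra
  then show "\<exists>r. x = r *\<^sub>R (\<i> * d)" ..
qed (auto simp: inner_complex_def)

lemma spacelike_geodesic_graph_over_line:
  assumes "\<eta>\<^sub>0 \<in> ball 0 1" "w \<noteq> 0"
  shows "spacelike_geodesic
           {(\<eta>, lor (1, \<eta>) \<sigma>) | \<eta>. \<eta> \<in> ball 0 1 \<and> (\<exists>r. \<eta> = \<eta>\<^sub>0 + r *\<^sub>R w)}"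
proof -
  define p where "p = (\<eta>\<^sub>0, lor (1, \<eta>\<^sub>0) \<sigma>)"
  define v where "v = (w, inner w (snd \<sigma>))"
  have "{(\<eta>, lor (1, \<eta>) \<sigma>) | \<eta>. \<eta> \<in> ball 0 1 \<and> (\<exists>r. \<eta> = \<eta>\<^sub>0 + r *\<^sub>R w)}
        = (ball 0 1 \<times> UNIV) \<inter> {p + r *\<^sub>R v | r. True}"
    by (auto simp: p_def v_def lor_one_eq_inner inner_add_left)
  moreover have "p \<in> (ball 0 1 \<times> UNIV) \<inter> {p + r *\<^sub>R v | r. True}"
    using assms(1) by (auto simp: p_def intro: exI[of _ 0])
  moreover have "fst v \<noteq> 0"
    using assms(2) by (simp add: v_def)
  ultimately show ?thesis
    unfolding spacelike_geodesic_def by blast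
qed

lemma spacelike_plane_inter_geodesic:
  assumes "\<eta>\<^sub>0 \<in> ball 0 1" "lor (1, \<eta>\<^sub>0) \<sigma> = lor (1, \<eta>\<^sub>0) \<sigma>'"
    and "spacelike_plane \<sigma> \<noteq> spacelike_plane \<sigma>'"
  shows "spacelike_geodesic (spacelike_plane \<sigma> \<inter> spacelike_plane \<sigma>')"
proof -
  define d where "d = snd \<sigma> - snd \<sigma>'"
  have same_height_iff: "lor (1, \<eta>) \<sigma> = lor (1, \<eta>) \<sigma>' \<longleftrightarrow> inner (\<eta> - \<eta>\<^sub>0) d = 0" for \<eta>
    using assms(2) by (simp add: lor_one_eq_inner d_def inner_diff) argo
  have "d \<noteq> 0"
  proof
    assume "d = 0"
    then have "\<sigma> = \<sigma>'"
      using assms(2) by (simp add: lor_one_eq_inner d_def prod_eq_iff)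
    with assms(3) show False by simp
  qed
  then have "lor (1, \<eta>) \<sigma> = lor (1, \<eta>) \<sigma>' \<longleftrightarrow> (\<exists>r. \<eta> = \<eta>\<^sub>0 + r *\<^sub>R (\<i> * d))" for \<eta>
    unfolding same_height_iff inner_eq_0_iff_scaleR_ii_mult[OF \<open>d \<noteq> 0\<close>]
    by (metis add_diff_cancel_left' diff_add_cancel add.commute)
  then have "spacelike_plane \<sigma> \<inter> spacelike_plane \<sigma>'
      = {(\<eta>, lor (1, \<eta>) \<sigma>) | \<eta>. \<eta> \<in> ball 0 1 \<and> (\<exists>r. \<eta> = \<eta>\<^sub>0 + r *\<^sub>R (\<i> * d))}"
    unfolding spacelike_plane_def by auto
  then show ?thesis
    using spacelike_geodesic_graph_over_line[OF assms(1)] \<open>d \<noteq> 0\<close> by simp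
qed

theorem lemma4p1:
  fixes \<phi> :: "complex \<Rightarrow> real"
  assumes cont: "continuous_on (sphere 0 1) \<phi>"
    and not_killing: "\<not> killing_support \<phi>"
  shows "(\<forall>\<sigma> \<sigma>'. support_plane_epi_plus \<phi> \<sigma> \<and> support_plane_epi_plus \<phi> \<sigma>'
            \<and> spacelike_plane \<sigma> \<noteq> spacelike_plane \<sigma>'
            \<longrightarrow> spacelike_geodesic (spacelike_plane \<sigma> \<inter> spacelike_plane \<sigma>'))
       \<and> (\<forall>\<sigma> \<sigma>'. support_plane_epi_minus \<phi> \<sigma> \<and> support_plane_epi_minus \<phi> \<sigma>'
            \<and> spacelike_plane \<sigma> \<noteq> spacelike_plane \<sigma>'
            \<longrightarrow> spacelike_geodesic (spacelike_plane \<sigma> \<inter> spacelike_plane \<sigma>'))"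
  using support_planes_epi_plus_meet support_planes_epi_minus_meet spacelike_plane_inter_geodesic
  by metis

end
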